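(* Let $v,w,X,Y\in\mathbb{R}^d$ with $\|X\|<\|v\|$ and $\|Y\|<\|w\|$, and define $$h(v,w,X,Y):=-\frac{\|X\|\|Y\|}{\|v\|\|w\|}+\sqrt{1-\frac{\|X\|^2}{\|v\|^2}}\sqrt{1-\frac{\|Y\|^2}{\|w\|^2}}.$$ If $\alpha(v,w)\leq h(v,w,X,Y)$, then $$\alpha(v+X,w+Y)\leq \alpha(v,w)\,h(v,w,X,Y)+\sqrt{1-\alpha(v,w)^2}\sqrt{1-h(v,w,X,Y)^2}.$$
   Context: For nonzero $a,b\in\mathbb{R}^d$, the cosine similarity is $\alpha(a,b)=\frac{\langle a,b\rangle}{\|a\|\|b\|}$. *)

theory Defs
  imports "HOL-Analysis.Analysis"
begin

definition cos_sim :: "real ^ 'd \<Rightarrow> real ^ 'd \<Rightarrow> real" where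
  "cos_sim a b = (a \<bullet> b) / (norm a * norm b)"

definition hfun :: "real ^ 'd \<Rightarrow> real ^ 'd \<Rightarrow> real ^ 'd \<Rightarrow> real ^ 'd \<Rightarrow> real" where
  "hfun v w X Y = - (norm X * norm Y) / (norm v * norm w)
     + sqrt (1 - norm X ^ 2 / norm v ^ 2) * sqrt (1 - norm Y ^ 2 / norm w ^ 2)"

end

theory Submission
  imports Defs
begin

text \<open>Work with angles \<open>\<angle>(p, q) = arccos (cos_sim p q)\<close>. For \<open>a = arcsin (\<parallel>X\<parallel> / \<parallel>v\<parallel>)\<close>
  and \<open>b = arcsin (\<parallel>Y\<parallel> / \<parallel>w\<parallel>)\<close> one has \<open>h = cos (a + b)\<close>, so the hypothesis says
  \<open>a + b \<le> \<angle>(v, w)\<close>. Adding \<open>X\<close> to \<open>v\<close> turns it by at most \<open>a\<close>, adding \<open>Y\<close> to \<open>w\<close> by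
  at most \<open>b\<close>. Angles satisfy the triangle inequality (Cauchy-Schwarz for the components
  orthogonal to the middle vector), hence \<open>0 \<le> \<angle>(v, w) - (a + b) \<le> \<angle>(v + X, w + Y)\<close>, and
  as cos decreases on \<open>[0, pi]\<close> the cosine similarity of \<open>v + X\<close> and \<open>w + Y\<close> is at most
  \<open>cos (\<angle>(v, w) - (a + b))\<close>, which expands to the right-hand side.\<close>

definition vec_angle :: "real ^ 'd \<Rightarrow> real ^ 'd \<Rightarrow> real" where
  "vec_angle a b = arccos (cos_sim a b)"

lemma arccos_le_iff_cos_le:
  assumes "0 \<le> t" "t \<le> pi" "\<bar>c\<bar> \<le> 1"
  shows "arccos c \<le> t \<longleftrightarrow> cos t \<le> c"
  by (metis assms abs_cos_le_one arccos_cos arccos_le_mono)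

lemma le_arccos_iff_le_cos:
  assumes "0 \<le> t" "t \<le> pi" "\<bar>c\<bar> \<le> 1"
  shows "t \<le> arccos c \<longleftrightarrow> c \<le> cos t"
  by (metis assms abs_cos_le_one arccos_cos arccos_le_mono)

lemma norm_div_norm_bounds:
  fixes x y :: "'a::real_normed_vector"
  assumes "norm x \<le> norm y"
  shows "-1 \<le> norm x / norm y" "0 \<le> norm x / norm y" "norm x / norm y \<le> 1"
proof -
  have "0 \<le> norm x / norm y" by simp
  moreover have "norm x / norm y \<le> 1"
    using assms by (cases "y = 0") (simp_all add: divide_le_eq_1)
  ultimately show "-1 \<le> norm x / norm y" "0 \<le> norm x / norm y" "norm x / norm y \<le> 1"
    by linarith+
qed

lemma arcsin_norm_div_norm_bounds:
  fixes x y :: "'a::real_normed_vector"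
  assumes "norm x \<le> norm y"
  shows "0 \<le> arcsin (norm x / norm y)" "arcsin (norm x / norm y) \<le> pi / 2"
  using arcsin_nonneg arcsin_ubound[OF norm_div_norm_bounds(1,3)[OF assms]]
    norm_div_norm_bounds[OF assms] by simp_all

lemma add_nonzero_of_norm_less:
  fixes v x :: "'a::real_normed_vector"
  assumes "norm x < norm v"
  shows "v + x \<noteq> 0"
  using assms by (metis add.inverse_unique norm_minus_cancel order.irrefl)

lemma abs_cos_sim_le_1: "\<bar>cos_sim a b\<bar> \<le> 1"
proof (cases "a = 0 \<or> b = 0")
  case True
  then show ?thesis by (auto simp: cos_sim_def)
next
  case False
  then have "0 < norm a * norm b" by simp
  then show ?thesis
    using Cauchy_Schwarz_ineq2[of a b] by (simp add: cos_sim_def abs_divide)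
qed

lemma cos_sim_commute: "cos_sim a b = cos_sim b a"
  by (simp add: cos_sim_def inner_commute mult.commute)

lemma cos_sim_eq_inner_normalized:
  assumes "a \<noteq> 0" "b \<noteq> 0"
  shows "cos_sim a b = (a /\<^sub>R norm a) \<bullet> (b /\<^sub>R norm b)"
  using assms by (simp add: cos_sim_def field_simps)

lemma vec_angle_commute: "vec_angle a b = vec_angle b a"
  by (simp add: vec_angle_def cos_sim_commute)

lemma vec_angle_bounds: "0 \<le> vec_angle a b" "vec_angle a b \<le> pi"
  using arccos_bounded abs_cos_sim_le_1[of a b] by (auto simp: vec_angle_def abs_le_iff)

lemma cos_vec_angle: "cos (vec_angle a b) = cos_sim a b"
  using abs_cos_sim_le_1[of a b] by (simp add: vec_angle_def abs_le_iff)

lemma sin_vec_angle: "sin (vec_angle a b) = sqrt (1 - (cos_sim a b)\<^sup>2)"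
  using abs_cos_sim_le_1[of a b] by (simp add: vec_angle_def sin_arccos_abs)

lemma inner_unit_vectors_ge:
  fixes x y z :: "'a::real_inner"
  assumes "norm x = 1" "norm y = 1" "norm z = 1"
  shows "(x \<bullet> y) * (y \<bullet> z) - sqrt (1 - (x \<bullet> y)\<^sup>2) * sqrt (1 - (y \<bullet> z)\<^sup>2) \<le> x \<bullet> z"
proof -
  define x' where "x' = x - (x \<bullet> y) *\<^sub>R y"
  define z' where "z' = z - (z \<bullet> y) *\<^sub>R y"
  have unit: "x \<bullet> x = 1" "y \<bullet> y = 1" "z \<bullet> z = 1"
    using assms by (simp_all add: dot_square_norm)
  have "x' \<bullet> z' = x \<bullet> z - (x \<bullet> y) * (y \<bullet> z)"
    unfolding x'_def z'_def
    by (simp add: inner_diff_left inner_diff_right unit inner_commute algebra_simps)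
  moreover have "x' \<bullet> x' = 1 - (x \<bullet> y)\<^sup>2" "z' \<bullet> z' = 1 - (y \<bullet> z)\<^sup>2"
    unfolding x'_def z'_def
    by (simp_all add: inner_diff_left inner_diff_right unit inner_commute algebra_simps
        power2_eq_square)
  then have "norm x' = sqrt (1 - (x \<bullet> y)\<^sup>2)" "norm z' = sqrt (1 - (y \<bullet> z)\<^sup>2)"
    by (simp_all add: norm_eq_sqrt_inner)
  ultimately show ?thesis
    using Cauchy_Schwarz_ineq2[of x' z'] by (simp add: abs_le_iff)
qed

lemma cos_add_vec_angle_le_cos_sim:
  assumes "x \<noteq> 0" "y \<noteq> 0" "z \<noteq> 0"
  shows "cos (vec_angle x y + vec_angle y z) \<le> cos_sim x z"
proof -
  have "norm (x /\<^sub>R norm x) = 1" "norm (y /\<^sub>R norm y) = 1" "norm (z /\<^sub>R norm z) = 1"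
    using assms by simp_all
  from inner_unit_vectors_ge[OF this]
  have "cos_sim x y * cos_sim y z - sqrt (1 - (cos_sim x y)\<^sup>2) * sqrt (1 - (cos_sim y z)\<^sup>2)
      \<le> cos_sim x z"
    by (simp only: cos_sim_eq_inner_normalized[OF assms(1,2)]
        cos_sim_eq_inner_normalized[OF assms(2,3)] cos_sim_eq_inner_normalized[OF assms(1,3)])
  then show ?thesis
    by (simp only: cos_add cos_vec_angle sin_vec_angle)
qed

lemma vec_angle_triangle:
  assumes "x \<noteq> 0" "y \<noteq> 0" "z \<noteq> 0"
  shows "vec_angle x z \<le> vec_angle x y + vec_angle y z"
proof (cases "vec_angle x y + vec_angle y z \<le> pi")
  case True
  have "0 \<le> vec_angle x y + vec_angle y z"
    using vec_angle_bounds(1)[of x y] vec_angle_bounds(1)[of y z] by linarith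
  then show ?thesis
    using arccos_le_iff_cos_le[OF _ True abs_cos_sim_le_1[of x z]]
      cos_add_vec_angle_le_cos_sim[OF assms]
    unfolding vec_angle_def[of x z] by blast
next
  case False
  then show ?thesis using vec_angle_bounds(2)[of x z] by linarith
qed

lemma cos_sim_add_ge:
  assumes "norm X < norm v"
  shows "sqrt (1 - (norm X / norm v)\<^sup>2) \<le> cos_sim v (v + X)"
proof -
  define n m x where "n = norm v" and "m = norm (v + X)" and "x = norm X"
  define r where "r = sqrt (n\<^sup>2 - x\<^sup>2)"
  have "0 \<le> x" "x < n" "0 < m"
    using assms add_nonzero_of_norm_less[OF assms] by (auto simp: n_def m_def x_def)
  then have r: "0 \<le> r" "r\<^sup>2 = n\<^sup>2 - x\<^sup>2"
    by (auto simp: r_def power_mono)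
  have "sqrt (1 - (x / n)\<^sup>2) = sqrt ((r / n)\<^sup>2)"
    using r \<open>x < n\<close> \<open>0 \<le> x\<close> by (simp add: power_divide field_simps)
  also have "\<dots> = r / n"
    using r \<open>0 \<le> x\<close> \<open>x < n\<close> by simp
  also have "\<dots> \<le> (n\<^sup>2 + m\<^sup>2 - x\<^sup>2) / (2 * n * m)"
    \<comment> \<open>AM-GM: \<open>2 m r \<le> m\<^sup>2 + r\<^sup>2 = n\<^sup>2 + m\<^sup>2 - x\<^sup>2\<close>\<close>
    using zero_le_power2[of "m - r"] r \<open>0 < m\<close> \<open>0 \<le> x\<close> \<open>x < n\<close>
    by (simp add: field_simps power2_diff)
  also have "\<dots> = cos_sim v (v + X)"
  proof -
    have inner: "v \<bullet> (v + X) = (n\<^sup>2 + m\<^sup>2 - x\<^sup>2) / 2"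
      by (simp add: n_def m_def x_def power2_norm_eq_inner inner_add_left inner_add_right
          inner_commute field_simps)
    show ?thesis unfolding cos_sim_def inner by (simp add: n_def m_def)
  qed
  finally show ?thesis by (simp add: n_def x_def)
qed

lemma vec_angle_add_le_arcsin:
  assumes "norm X < norm v"
  shows "vec_angle v (v + X) \<le> arcsin (norm X / norm v)"
proof -
  have "cos (arcsin (norm X / norm v)) \<le> cos_sim v (v + X)"
    using cos_sim_add_ge[OF assms] cos_arcsin[OF norm_div_norm_bounds(1,3)[OF less_imp_le[OF assms]]]
    by simp
  moreover have "0 \<le> arcsin (norm X / norm v)" "arcsin (norm X / norm v) \<le> pi"
    using arcsin_norm_div_norm_bounds[OF less_imp_le[OF assms]] pi_gt_zero by linarith+
  ultimately show ?thesis
    using arccos_le_iff_cos_le[OF _ _ abs_cos_sim_le_1] unfolding vec_angle_def by blast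
qed

lemma hfun_eq_cos_add_arcsin:
  assumes "norm X \<le> norm v" "norm Y \<le> norm w"
  shows "hfun v w X Y = cos (arcsin (norm X / norm v) + arcsin (norm Y / norm w))"
  using cos_arcsin[OF norm_div_norm_bounds(1,3)[OF assms(1)]]
    cos_arcsin[OF norm_div_norm_bounds(1,3)[OF assms(2)]]
    sin_arcsin[OF norm_div_norm_bounds(1,3)[OF assms(1)]]
    sin_arcsin[OF norm_div_norm_bounds(1,3)[OF assms(2)]]
  by (simp add: hfun_def cos_add power_divide)

lemma vec_angle_le_perturbed:
  assumes "norm X < norm v" "norm Y < norm w"
  shows "vec_angle v w
    \<le> arcsin (norm X / norm v) + vec_angle (v + X) (w + Y) + arcsin (norm Y / norm w)"
proof -
  have nonzero: "v \<noteq> 0" "w \<noteq> 0" "v + X \<noteq> 0" "w + Y \<noteq> 0"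
    using assms add_nonzero_of_norm_less[OF assms(1)] add_nonzero_of_norm_less[OF assms(2)]
    by auto
  have "vec_angle v w
      \<le> vec_angle v (v + X) + vec_angle (v + X) (w + Y) + vec_angle (w + Y) w"
    using vec_angle_triangle[OF nonzero(1,3,2)] vec_angle_triangle[OF nonzero(3,4,2)]
    by linarith
  then show ?thesis
    using vec_angle_add_le_arcsin[OF assms(1)] vec_angle_add_le_arcsin[OF assms(2)]
    unfolding vec_angle_commute[of "w + Y" w] by linarith
qed

theorem lemma2:
  fixes v w X Y :: "real ^ 'd"
  assumes "norm X < norm v" and "norm Y < norm w"
    and "cos_sim v w \<le> hfun v w X Y"
  shows "cos_sim (v + X) (w + Y) \<le>
    cos_sim v w * hfun v w X Y + sqrt (1 - (cos_sim v w)^2) * sqrt (1 - (hfun v w X Y)^2)"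
proof -
  define a b where "a = arcsin (norm X / norm v)" and "b = arcsin (norm Y / norm w)"
  have ab: "0 \<le> a + b" "a + b \<le> pi"
    using arcsin_norm_div_norm_bounds[OF less_imp_le[OF assms(1)]]
      arcsin_norm_div_norm_bounds[OF less_imp_le[OF assms(2)]]
    unfolding a_def b_def by linarith+
  have h: "hfun v w X Y = cos (a + b)"
    unfolding a_def b_def using assms(1,2) by (simp add: hfun_eq_cos_add_arcsin)
  have sin_ab: "sin (a + b) = sqrt (1 - (hfun v w X Y)\<^sup>2)"
    using sin_cos_sqrt[OF sin_ge_zero[OF ab]] h by simp
  have "a + b \<le> vec_angle v w"
    unfolding vec_angle_def using le_arccos_iff_le_cos[OF ab abs_cos_sim_le_1[of v w]] assms(3) h
    by simp
  moreover have "vec_angle v w \<le> a + vec_angle (v + X) (w + Y) + b"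
    unfolding a_def b_def using assms(1,2) by (rule vec_angle_le_perturbed)
  ultimately have "cos (vec_angle (v + X) (w + Y)) \<le> cos (vec_angle v w - (a + b))"
    using vec_angle_bounds(2)[of "v + X" "w + Y"] by (intro cos_monotone_0_pi_le) linarith+
  then have "cos_sim (v + X) (w + Y) \<le> cos (vec_angle v w - (a + b))"
    by (simp only: cos_vec_angle)
  also have "\<dots> = cos_sim v w * hfun v w X Y
      + sqrt (1 - (cos_sim v w)\<^sup>2) * sqrt (1 - (hfun v w X Y)\<^sup>2)"
    by (simp only: cos_diff cos_vec_angle sin_vec_angle sin_ab h)
  finally show ?thesis .
qed

end
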